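(* In the setting of the MTL-IUS iteration below, under $L$-smoothness, $\mu$-strong convexity, bounded gradient variance and bounded second moments, and with $\eta_t\le\frac1L$, $\eta_t$ non-increasing and $\eta_t\le 2\eta_{t+1}$, the quantity $\Delta_t=\mathbb{E}\|w_t-w^*\|^2$ satisfies $$\Delta_{t+1}\le(1-\mu\eta_t)\Delta_t+\eta_t^2B,\qquad B=\frac1{N^2}\sum_{k=1}^N\sigma_k^2+2L\Gamma+G^2 .$$
   Context: $F^{(1)},\dots,F^{(N)}:\mathbb{R}^d\to\mathbb{R}$, $F=\frac1N\sum_kF^{(k)}$, minimizer $w^*$, $F^*=F(w^* )$, ${F^{(k)}}^*=\min F^{(k)}$, $\Gamma=F^*-\frac1N\sum_k{F^{(k)}}^*$. Each $F^{(k)}$ is $L$-smooth ($F^{(k)}(v)\le F^{(k)}(w)+(v-w)^T\nabla F^{(k)}(w)+\frac L2\|v-w\|^2$) and $\mu$-strongly convex ($F^{(k)}(v)\ge F^{(k)}(w)+(v-w)^T\nabla F^{(k)}(w)+\frac\mu2\|v-w\|^2$). Stochastic gradients $\nabla F^{(k)}(w_t,\xi_t^k)$ with independently drawn samples are unbiased, $\mathbb{E}\|\nabla F^{(k)}(w_t,\xi_t^k)-\nabla F^{(k)}(w_t)\|^2\le\sigma_k^2$, and $\mathbb{E}\|\nabla F^{(k)}(w_t,\xi_t^k)\|^2\le G^2$. Iteration: $v_{t+1}^k=w_t-\eta_t\nabla F^{(k)}(w_t,\xi_t^k)$, $w_{t+1}=v_{t+1}^{s_t}$ with $s_t$ uniform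 on $\{1,\dots,N\}$ and independent of all else. *)

theory Defs
  imports "HOL-Probability.Probability"
begin

definition L_smooth :: "real \<Rightarrow> ('a::euclidean_space \<Rightarrow> real) \<Rightarrow> ('a \<Rightarrow> 'a) \<Rightarrow> bool" where
  "L_smooth L f gf \<longleftrightarrow>
     (\<forall>v w. f v \<le> f w + (v - w) \<bullet> gf w + L / 2 * (norm (v - w))\<^sup>2)"

definition strongly_convex :: "real \<Rightarrow> ('a::euclidean_space \<Rightarrow> real) \<Rightarrow> ('a \<Rightarrow> 'a) \<Rightarrow> bool" where
  "strongly_convex \<mu> f gf \<longleftrightarrow>
     (\<forall>v w. f v \<ge> f w + (v - w) \<bullet> gf w + \<mu> / 2 * (norm (v - w))\<^sup>2)"

definition is_gradient :: "('a::euclidean_space \<Rightarrow> real) \<Rightarrow> ('a \<Rightarrow> 'a) \<Rightarrow> bool" where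
  "is_gradient f gf \<longleftrightarrow> (\<forall>w. (f has_derivative (\<lambda>h. gf w \<bullet> h)) (at w))"

text \<open>Independence of two random variables with possibly different codomain types
  (the library's indep_var requires equal types; this is exactly its characterisation
  indep_var_eq, stated for heterogeneous types).\<close>
definition indep_rv :: "'m measure \<Rightarrow> 'a measure \<Rightarrow> ('m \<Rightarrow> 'a) \<Rightarrow> 'b measure \<Rightarrow> ('m \<Rightarrow> 'b) \<Rightarrow> bool" where
  "indep_rv M S X T Y \<longleftrightarrow>
     X \<in> measurable M S \<and> Y \<in> measurable M T \<and>
     prob_space.indep_set M
       (sigma_sets (space M) {X -` A \<inter> space M | A. A \<in> sets S})
       (sigma_sets (space M) {Y -` A \<inter> space M | A. A \<in> sets T})"

end

theory Submission
  imports Defs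
begin

text \<open>Write \<open>\<Delta>\<^sub>t = E\<parallel>w\<^sub>t - w\<^sup>*\<parallel>\<^sup>2\<close>. Expanding the square,
  \<open>\<Delta>\<^sub>t\<^sub>+\<^sub>1 = \<Delta>\<^sub>t - 2 \<eta>\<^sub>t E[(w\<^sub>t - w\<^sup>*) \<bullet> g\<^sub>s(w\<^sub>t, \<xi>\<^sub>s)] + \<eta>\<^sub>t\<^sup>2 E\<parallel>g\<^sub>s(w\<^sub>t, \<xi>\<^sub>s)\<parallel>\<^sup>2\<close>.
  Since the task index \<open>s\<close> is uniform and independent of \<open>\<xi>\<close>, and both are independent of
  \<open>w\<^sub>t\<close>, each expectation is the average over the tasks \<open>k\<close> of the expectation for a fixed
  task; unbiasedness then replaces \<open>g\<^sub>k\<close> by \<open>\<nabla>F\<^sub>k\<close> in the cross term. Strong convexity of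
  every \<open>F\<^sub>k\<close> together with minimality of \<open>w\<^sup>*\<close> for \<open>\<Sum>\<^sub>k F\<^sub>k\<close> gives
  \<open>\<Sum>\<^sub>k (x - w\<^sup>*) \<bullet> \<nabla>F\<^sub>k(x) \<ge> N \<mu>/2 \<parallel>x - w\<^sup>*\<parallel>\<^sup>2\<close>, and the second moment bound gives
  \<open>\<Delta>\<^sub>t\<^sub>+\<^sub>1 \<le> (1 - \<mu> \<eta>\<^sub>t) \<Delta>\<^sub>t + \<eta>\<^sub>t\<^sup>2 G\<^sup>2\<close>, which is stronger than the claim because \<open>\<Gamma> \<ge> 0\<close>.\<close>

lemma (in prob_space) sigma_sets_vimage_comp_subset:
  assumes X: "X \<in> measurable M S" and f: "f \<in> measurable S S'"
  shows "sigma_sets (space M) {(\<lambda>\<omega>. f (X \<omega>)) -` A \<inter> space M | A. A \<in> sets S'}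
       \<subseteq> sigma_sets (space M) {X -` A \<inter> space M | A. A \<in> sets S}"
proof (rule sigma_sets_mono, safe)
  fix A assume A: "A \<in> sets S'"
  have "(\<lambda>\<omega>. f (X \<omega>)) -` A \<inter> space M = X -` (f -` A \<inter> space S) \<inter> space M"
    using measurable_space[OF X] by auto
  moreover have "f -` A \<inter> space S \<in> sets S" using f A by (rule measurable_sets)
  ultimately show "(\<lambda>\<omega>. f (X \<omega>)) -` A \<inter> space M
      \<in> sigma_sets (space M) {X -` A \<inter> space M | A. A \<in> sets S}"
    by (blast intro: sigma_sets.Basic)
qed

lemma (in prob_space) indep_rv_compose:
  assumes ind: "indep_rv M S X T Y" and f: "f \<in> measurable S S'" and h: "h \<in> measurable T T'"
  shows "indep_rv M S' (\<lambda>\<omega>. f (X \<omega>)) T' (\<lambda>\<omega>. h (Y \<omega>))"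
proof -
  have X: "X \<in> measurable M S" and Y: "Y \<in> measurable M T"
    and I: "indep_set (sigma_sets (space M) {X -` A \<inter> space M | A. A \<in> sets S})
                      (sigma_sets (space M) {Y -` A \<inter> space M | A. A \<in> sets T})"
    using ind unfolding indep_rv_def by auto
  have "indep_set (sigma_sets (space M) {(\<lambda>\<omega>. f (X \<omega>)) -` A \<inter> space M | A. A \<in> sets S'})
                  (sigma_sets (space M) {(\<lambda>\<omega>. h (Y \<omega>)) -` A \<inter> space M | A. A \<in> sets T'})"
    using I sigma_sets_vimage_comp_subset[OF X f] sigma_sets_vimage_comp_subset[OF Y h]
    unfolding indep_sets2_eq by blast
  then show ?thesis
    unfolding indep_rv_def using measurable_compose[OF X f] measurable_compose[OF Y h] by auto
qed

lemma (in prob_space) indep_rv_component: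
  assumes "indep_rv M (PiM I A) (\<lambda>\<omega>. \<lambda>i\<in>I. X i \<omega>) T Y" and "k \<in> I"
  shows "indep_rv M (A k) (X k) T Y"
  using indep_rv_compose[OF assms(1) measurable_component_singleton[OF assms(2)] measurable_id]
    assms(2)
  by simp

lemma (in prob_space) indep_rv_component_pair:
  assumes "indep_rv M S X (PiM I A \<Otimes>\<^sub>M T) (\<lambda>\<omega>. (\<lambda>i\<in>I. Y i \<omega>, V \<omega>))" and k: "k \<in> I"
  shows "indep_rv M S X (A k \<Otimes>\<^sub>M T) (\<lambda>\<omega>. (Y k \<omega>, V \<omega>))"
proof -
  have "(\<lambda>x. (fst x k, snd x)) \<in> measurable (PiM I A \<Otimes>\<^sub>M T) (A k \<Otimes>\<^sub>M T)"
    by (intro measurable_Pair measurable_compose[OF measurable_fst measurable_component_singleton[OF k]]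
        measurable_snd)
  from indep_rv_compose[OF assms(1) measurable_id this] show ?thesis
    using k by simp
qed

lemma (in prob_space) indep_rv_imp_indep_var:
  "indep_rv M S X T Y \<Longrightarrow> indep_var S X T Y"
  unfolding indep_rv_def indep_var_eq by auto

lemma (in prob_space) distr_pair_eq_pair_measure_if_indep_rv:
  assumes ind: "indep_rv M S X T Y"
  shows "distr M (S \<Otimes>\<^sub>M T) (\<lambda>\<omega>. (X \<omega>, Y \<omega>)) = distr M S X \<Otimes>\<^sub>M distr M T Y"
proof -
  have X: "X \<in> measurable M S" and Y: "Y \<in> measurable M T"
    and I: "indep_set (sigma_sets (space M) {X -` A \<inter> space M | A. A \<in> sets S})
                      (sigma_sets (space M) {Y -` A \<inter> space M | A. A \<in> sets T})"
    using ind unfolding indep_rv_def by auto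
  have XY: "(\<lambda>\<omega>. (X \<omega>, Y \<omega>)) \<in> measurable M (S \<Otimes>\<^sub>M T)" using X Y by measurable
  show ?thesis
  proof (rule pair_measure_eqI[symmetric])
    show "sigma_finite_measure (distr M S X)" "sigma_finite_measure (distr M T Y)"
      using prob_space_distr[OF X] prob_space_distr[OF Y]
      by (simp_all add: prob_space_imp_sigma_finite)
    show "sets (distr M S X \<Otimes>\<^sub>M distr M T Y) = sets (distr M (S \<Otimes>\<^sub>M T) (\<lambda>\<omega>. (X \<omega>, Y \<omega>)))"
      by (simp add: sets_pair_measure)
    fix A B assume "A \<in> sets (distr M S X)" and "B \<in> sets (distr M T Y)"
    then have A: "A \<in> sets S" and B: "B \<in> sets T" by auto
    have "(\<lambda>\<omega>. (X \<omega>, Y \<omega>)) -` (A \<times> B) \<inter> space M = (X -` A \<inter> space M) \<inter> (Y -` B \<inter> space M)"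
      by auto
    moreover have "prob ((X -` A \<inter> space M) \<inter> (Y -` B \<inter> space M))
        = prob (X -` A \<inter> space M) * prob (Y -` B \<inter> space M)"
      by (rule indep_setD[OF I]) (auto intro!: sigma_sets.Basic A B)
    ultimately show "emeasure (distr M S X) A * emeasure (distr M T Y) B
        = emeasure (distr M (S \<Otimes>\<^sub>M T) (\<lambda>\<omega>. (X \<omega>, Y \<omega>))) (A \<times> B)"
      using A B X Y XY by (simp add: emeasure_distr emeasure_eq_measure ennreal_mult')
  qed
qed

lemma (in prob_space) integral_indep_rv_iterated:
  fixes q :: "'b \<Rightarrow> 'c \<Rightarrow> real"
  assumes ind: "indep_rv M S X T Y"
    and q: "case_prod q \<in> borel_measurable (S \<Otimes>\<^sub>M T)"
    and int: "integrable M (\<lambda>\<omega>. q (X \<omega>) (Y \<omega>))"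
  shows "(\<integral>\<omega>. q (X \<omega>) (Y \<omega>) \<partial>M) = (\<integral>x. (\<integral>\<omega>. q x (Y \<omega>) \<partial>M) \<partial>distr M S X)"
    and "AE x in distr M S X. integrable M (\<lambda>\<omega>. q x (Y \<omega>))"
    and "integrable (distr M S X) (\<lambda>x. \<integral>\<omega>. q x (Y \<omega>) \<partial>M)"
proof -
  have X: "X \<in> measurable M S" and Y: "Y \<in> measurable M T"
    using ind unfolding indep_rv_def by auto
  have XY: "(\<lambda>\<omega>. (X \<omega>, Y \<omega>)) \<in> measurable M (S \<Otimes>\<^sub>M T)" using X Y by measurable
  interpret PX: prob_space "distr M S X" by (rule prob_space_distr[OF X])
  interpret PY: prob_space "distr M T Y" by (rule prob_space_distr[OF Y])
  interpret PXY: pair_prob_space "distr M S X" "distr M T Y" ..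
  note law = distr_pair_eq_pair_measure_if_indep_rv[OF ind]
  have int_pair: "integrable (distr M S X \<Otimes>\<^sub>M distr M T Y) (case_prod q)"
    unfolding law[symmetric] using int q XY by (subst integrable_distr_eq) auto
  have slice: "q x \<in> borel_measurable T" if "x \<in> space S" for x
    using measurable_Pair2[OF q that] by simp
  have inner: "(\<integral>y. q x y \<partial>distr M T Y) = (\<integral>\<omega>. q x (Y \<omega>) \<partial>M)"
    if "x \<in> space S" for x
    by (rule integral_distr[OF Y slice[OF that]])
  have inner_int: "integrable (distr M T Y) (q x) = integrable M (\<lambda>\<omega>. q x (Y \<omega>))"
    if "x \<in> space S" for x
    by (rule integrable_distr_eq[OF Y slice[OF that]])
  have "(\<integral>\<omega>. q (X \<omega>) (Y \<omega>) \<partial>M) = integral\<^sup>L (distr M S X \<Otimes>\<^sub>M distr M T Y) (case_prod q)"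
    unfolding law[symmetric] using q XY by (subst integral_distr) auto
  also have "\<dots> = (\<integral>x. (\<integral>y. q x y \<partial>distr M T Y) \<partial>distr M S X)"
    using PXY.integral_fst'[OF int_pair] by simp
  also have "\<dots> = (\<integral>x. (\<integral>\<omega>. q x (Y \<omega>) \<partial>M) \<partial>distr M S X)"
    by (rule Bochner_Integration.integral_cong) (simp_all add: inner)
  finally show "(\<integral>\<omega>. q (X \<omega>) (Y \<omega>) \<partial>M) = (\<integral>x. (\<integral>\<omega>. q x (Y \<omega>) \<partial>M) \<partial>distr M S X)" .
  show "AE x in distr M S X. integrable M (\<lambda>\<omega>. q x (Y \<omega>))"
    using PXY.AE_integrable_fst'[OF int_pair] by (rule AE_mp) (auto intro!: AE_I2 simp: inner_int)
  show "integrable (distr M S X) (\<lambda>x. \<integral>\<omega>. q x (Y \<omega>) \<partial>M)"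
    using PXY.integrable_fst'[OF int_pair]
      Bochner_Integration.integrable_cong[OF refl, where M = "distr M S X"
        and f = "\<lambda>x. \<integral>y. q x y \<partial>distr M T Y" and g = "\<lambda>x. \<integral>\<omega>. q x (Y \<omega>) \<partial>M"]
    by (simp add: inner)
qed

lemma (in prob_space) integral_if_eq_indep:
  fixes f :: "'c \<Rightarrow> real" and S :: "'a \<Rightarrow> 'd"
  assumes indZ: "indep_rv M \<Xi> Z (count_space UNIV) S"
    and f: "f \<in> borel_measurable \<Xi>" and int: "integrable M (\<lambda>\<omega>. f (Z \<omega>))"
  shows "(\<integral>\<omega>. (if S \<omega> = k then f (Z \<omega>) else 0) \<partial>M)
          = prob {\<omega> \<in> space M. S \<omega> = k} * (\<integral>\<omega>. f (Z \<omega>) \<partial>M)"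
proof -
  have S: "S \<in> measurable M (count_space UNIV)" using indZ unfolding indep_rv_def by auto
  have ind: "indep_var borel (\<lambda>\<omega>. f (Z \<omega>)) borel (\<lambda>\<omega>. indicator {k} (S \<omega>) :: real)"
    using f by (intro indep_rv_imp_indep_var indep_rv_compose[OF indZ]) simp_all
  have "(\<lambda>\<omega>. indicator {k} (S \<omega>) :: real) \<in> borel_measurable M"
    using measurable_compose[OF S, of "\<lambda>j. indicator {k} j" borel] by simp
  then have int_ind: "integrable M (\<lambda>\<omega>. indicator {k} (S \<omega>) :: real)"
    by (intro integrable_const_bound[where B = 1]) auto
  have "(\<integral>\<omega>. indicator {k} (S \<omega>) \<partial>M) = (\<integral>\<omega>. indicator {\<omega> \<in> space M. S \<omega> = k} \<omega> \<partial>M)"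
    by (rule Bochner_Integration.integral_cong) (auto simp: indicator_def)
  also have "\<dots> = prob {\<omega> \<in> space M. S \<omega> = k}"
    using S by (simp add: measurable_count_space_eq1)
  finally have E_ind: "(\<integral>\<omega>. indicator {k} (S \<omega>) \<partial>M) = prob {\<omega> \<in> space M. S \<omega> = k}" .
  have "(\<integral>\<omega>. (if S \<omega> = k then f (Z \<omega>) else 0) \<partial>M) = (\<integral>\<omega>. f (Z \<omega>) * indicator {k} (S \<omega>) \<partial>M)"
    by (rule Bochner_Integration.integral_cong) auto
  then show ?thesis
    using indep_var_lebesgue_integral[OF ind int int_ind] E_ind by simp
qed

lemma (in prob_space) integral_if_eq_indep_selector:
  fixes h :: "'b \<Rightarrow> 'c \<Rightarrow> real" and S :: "'a \<Rightarrow> 'd"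
  assumes indW: "indep_rv M A W (\<Xi> \<Otimes>\<^sub>M count_space UNIV) (\<lambda>\<omega>. (Z \<omega>, S \<omega>))"
    and indZ: "indep_rv M \<Xi> Z (count_space UNIV) S"
    and h: "case_prod h \<in> borel_measurable (A \<Otimes>\<^sub>M \<Xi>)"
    and int: "integrable M (\<lambda>\<omega>. h (W \<omega>) (Z \<omega>))"
  shows "(\<integral>\<omega>. (if S \<omega> = k then h (W \<omega>) (Z \<omega>) else 0) \<partial>M)
          = prob {\<omega> \<in> space M. S \<omega> = k} * (\<integral>\<omega>. h (W \<omega>) (Z \<omega>) \<partial>M)"
proof -
  let ?p = "prob {\<omega> \<in> space M. S \<omega> = k}"
  let ?W = "distr M A W"
  have S: "S \<in> measurable M (count_space UNIV)" using indZ unfolding indep_rv_def by auto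
  note [measurable] = h
  have int_sel: "integrable M (\<lambda>\<omega>. if S \<omega> = k then h (W \<omega>) (Z \<omega>) else 0)"
    using int S by (intro Bochner_Integration.integrable_bound[OF int]) auto
  note full = integral_indep_rv_iterated[OF indW, where q = "\<lambda>x (z, j). h x z", simplified, OF int]
  note sel = integral_indep_rv_iterated[OF indW,
      where q = "\<lambda>x (z, j). if j = k then h x z else 0", simplified, OF int_sel]
  have frozen: "(\<integral>\<omega>. (if S \<omega> = k then h x (Z \<omega>) else 0) \<partial>M) = ?p * (\<integral>\<omega>. h x (Z \<omega>) \<partial>M)"
    if "x \<in> space A" and "integrable M (\<lambda>\<omega>. h x (Z \<omega>))" for x
  proof -
    have "h x \<in> borel_measurable \<Xi>" using measurable_Pair2[OF h that(1)] by simp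
    from integral_if_eq_indep[OF indZ this that(2)] show ?thesis .
  qed
  have "(\<integral>\<omega>. (if S \<omega> = k then h (W \<omega>) (Z \<omega>) else 0) \<partial>M)
      = (\<integral>x. (\<integral>\<omega>. (if S \<omega> = k then h x (Z \<omega>) else 0) \<partial>M) \<partial>?W)"
    by (rule sel(1))
  also have "\<dots> = (\<integral>x. ?p * (\<integral>\<omega>. h x (Z \<omega>) \<partial>M) \<partial>?W)"
  proof (rule integral_cong_AE)
    show "AE x in ?W. (\<integral>\<omega>. (if S \<omega> = k then h x (Z \<omega>) else 0) \<partial>M) = ?p * (\<integral>\<omega>. h x (Z \<omega>) \<partial>M)"
      using full(2) by (rule AE_mp) (auto intro!: AE_I2 frozen)
  qed (use sel(3) full(3) in auto)
  also have "\<dots> = ?p * (\<integral>\<omega>. h (W \<omega>) (Z \<omega>) \<partial>M)"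
    using full(1) by simp
  finally show ?thesis .
qed

lemma strongly_convex_inner_gradient_ge:
  assumes "strongly_convex \<mu> f gf"
  shows "f x - f y + \<mu> / 2 * (norm (x - y))\<^sup>2 \<le> (x - y) \<bullet> gf x"
proof -
  have "f y \<ge> f x + (y - x) \<bullet> gf x + \<mu> / 2 * (norm (y - x))\<^sup>2"
    using assms unfolding strongly_convex_def by blast
  moreover have "(y - x) \<bullet> gf x = - ((x - y) \<bullet> gf x)" by (simp add: inner_diff_left)
  ultimately show ?thesis by (simp add: norm_minus_commute)
qed

lemma sum_inner_gradient_ge_at_minimizer:
  assumes sc: "\<And>k. k \<in> I \<Longrightarrow> strongly_convex \<mu> (f k) (gf k)"
    and min: "(\<Sum>k\<in>I. f k y) \<le> (\<Sum>k\<in>I. f k x)"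
  shows "real (card I) * (\<mu> / 2 * (norm (x - y))\<^sup>2) \<le> (\<Sum>k\<in>I. (x - y) \<bullet> gf k x)"
proof -
  have "real (card I) * (\<mu> / 2 * (norm (x - y))\<^sup>2)
      \<le> (\<Sum>k\<in>I. f k x) - (\<Sum>k\<in>I. f k y) + real (card I) * (\<mu> / 2 * (norm (x - y))\<^sup>2)"
    using min by simp
  also have "\<dots> = (\<Sum>k\<in>I. f k x - f k y + \<mu> / 2 * (norm (x - y))\<^sup>2)"
    by (simp add: sum.distrib sum_subtractf)
  also have "\<dots> \<le> (\<Sum>k\<in>I. (x - y) \<bullet> gf k x)"
    by (intro sum_mono strongly_convex_inner_gradient_ge sc)
  finally show ?thesis .
qed

lemma strongly_convex_bdd_below:
  assumes sc: "strongly_convex \<mu> f gf" and \<mu>: "\<mu> > 0"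
  shows "bdd_below (range f)"
proof (rule bdd_belowI2)
  fix v
  have "f v \<ge> f 0 + v \<bullet> gf 0 + \<mu> / 2 * (norm v)\<^sup>2"
    using sc unfolding strongly_convex_def by (metis diff_zero)
  moreover have "v \<bullet> gf 0 \<ge> - (norm v * norm (gf 0))"
    using Cauchy_Schwarz_ineq2[of v "gf 0"] by linarith
  moreover have "\<mu> / 2 * (norm v)\<^sup>2 - norm v * norm (gf 0) + (norm (gf 0))\<^sup>2 / (2 * \<mu>)
      = (\<mu> * norm v - norm (gf 0))\<^sup>2 / (2 * \<mu>)"
    using \<mu> by (simp add: field_simps power2_eq_square)
  moreover have "(\<mu> * norm v - norm (gf 0))\<^sup>2 / (2 * \<mu>) \<ge> 0" using \<mu> by simp
  ultimately show "f 0 - (norm (gf 0))\<^sup>2 / (2 * \<mu>) \<le> f v" by linarith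
qed

lemma sum_INF_le_if_strongly_convex:
  assumes "\<And>k. k \<in> I \<Longrightarrow> strongly_convex \<mu> (f k) (gf k)" and "\<mu> > 0"
  shows "(\<Sum>k\<in>I. INF x. f k x) \<le> (\<Sum>k\<in>I. f k y)"
  using assms by (intro sum_mono cINF_lower strongly_convex_bdd_below) auto

lemma norm_diff_scaleR_power2:
  fixes a b :: "'a::real_inner"
  shows "(norm (a - c *\<^sub>R b))\<^sup>2 = (norm a)\<^sup>2 - 2 * c * (a \<bullet> b) + c\<^sup>2 * (norm b)\<^sup>2"
  unfolding power2_norm_eq_inner
  by (simp add: inner_diff_left inner_diff_right inner_commute algebra_simps power2_eq_square)

lemma abs_inner_le_power2_norm_add:
  fixes a b :: "'a::real_inner"
  shows "\<bar>a \<bullet> b\<bar> \<le> (norm a)\<^sup>2 + (norm b)\<^sup>2"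
proof -
  have "2 * (norm a * norm b) \<le> (norm a)\<^sup>2 + (norm b)\<^sup>2"
    using zero_le_power2[of "norm a - norm b"] by (simp add: power2_diff)
  then show ?thesis
    using Cauchy_Schwarz_ineq2[of a b] mult_nonneg_nonneg[OF norm_ge_zero norm_ge_zero, of a b]
    by linarith
qed

text \<open>One step of the iteration, with \<open>W = w\<^sub>t\<close>, \<open>Z k = \<xi>\<^sub>t\<^sup>k\<close> and \<open>S = s\<^sub>t\<close>.\<close>

locale random_task_step = prob_space M for M :: "'m measure" +
  fixes \<Xi> :: "'c measure" and N :: nat
    and g :: "nat \<Rightarrow> 'a::euclidean_space \<Rightarrow> 'c \<Rightarrow> 'a" and gradF :: "nat \<Rightarrow> 'a \<Rightarrow> 'a"
    and W :: "'m \<Rightarrow> 'a" and Z :: "nat \<Rightarrow> 'm \<Rightarrow> 'c" and S :: "'m \<Rightarrow> nat"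
  assumes N_ge_1: "N \<ge> 1"
    and g_measurable: "\<And>k. k \<in> {1..N} \<Longrightarrow> case_prod (g k) \<in> borel_measurable (borel \<Otimes>\<^sub>M \<Xi>)"
    and unbiased: "\<And>k x. k \<in> {1..N} \<Longrightarrow>
        integrable M (\<lambda>\<omega>. g k x (Z k \<omega>)) \<and> (\<integral>\<omega>. g k x (Z k \<omega>) \<partial>M) = gradF k x"
    and S_range: "\<And>\<omega>. \<omega> \<in> space M \<Longrightarrow> S \<omega> \<in> {1..N}"
    and S_uniform: "\<And>k. k \<in> {1..N} \<Longrightarrow> prob {\<omega> \<in> space M. S \<omega> = k} = 1 / real N"
    and indep_W: "\<And>k. k \<in> {1..N} \<Longrightarrow>
        indep_rv M borel W (\<Xi> \<Otimes>\<^sub>M count_space UNIV) (\<lambda>\<omega>. (Z k \<omega>, S \<omega>))"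
    and indep_Z: "\<And>k. k \<in> {1..N} \<Longrightarrow> indep_rv M \<Xi> (Z k) (count_space UNIV) S"
begin

lemma W_measurable: "W \<in> borel_measurable M"
  using indep_W[of 1] N_ge_1 unfolding indep_rv_def by auto

lemma S_measurable: "S \<in> measurable M (count_space UNIV)"
  using indep_Z[of 1] N_ge_1 unfolding indep_rv_def by auto

lemma Z_measurable: "k \<in> {1..N} \<Longrightarrow> Z k \<in> measurable M \<Xi>"
  using indep_Z unfolding indep_rv_def by auto

lemma integral_selected_task:
  fixes h :: "nat \<Rightarrow> 'a \<Rightarrow> 'c \<Rightarrow> real"
  assumes h_meas: "\<And>k. k \<in> {1..N} \<Longrightarrow> case_prod (h k) \<in> borel_measurable (borel \<Otimes>\<^sub>M \<Xi>)"
    and h_int: "\<And>k. k \<in> {1..N} \<Longrightarrow> integrable M (\<lambda>\<omega>. h k (W \<omega>) (Z k \<omega>))"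
  shows "integrable M (\<lambda>\<omega>. h (S \<omega>) (W \<omega>) (Z (S \<omega>) \<omega>))"
    and "(\<integral>\<omega>. h (S \<omega>) (W \<omega>) (Z (S \<omega>) \<omega>) \<partial>M) = (\<Sum>k=1..N. \<integral>\<omega>. h k (W \<omega>) (Z k \<omega>) \<partial>M) / N"
proof -
  define sel where "sel k \<omega> = (if S \<omega> = k then h k (W \<omega>) (Z k \<omega>) else 0)" for k \<omega>
  have sel_sum: "h (S \<omega>) (W \<omega>) (Z (S \<omega>) \<omega>) = (\<Sum>k=1..N. sel k \<omega>)" if "\<omega> \<in> space M" for \<omega>
    using S_range[OF that] by (simp add: sel_def sum.delta')
  have sel_int: "integrable M (sel k)" if k: "k \<in> {1..N}" for k
    unfolding sel_def using h_int[OF k] S_measurable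
    by (intro Bochner_Integration.integrable_bound[OF h_int[OF k]]) auto
  have sel_integral: "integral\<^sup>L M (sel k) = (\<integral>\<omega>. h k (W \<omega>) (Z k \<omega>) \<partial>M) / N"
    if k: "k \<in> {1..N}" for k
    using integral_if_eq_indep_selector[OF indep_W[OF k] indep_Z[OF k] h_meas[OF k] h_int[OF k]]
      S_uniform[OF k]
    unfolding sel_def by simp
  have "integrable M (\<lambda>\<omega>. \<Sum>k=1..N. sel k \<omega>)"
    by (intro Bochner_Integration.integrable_sum sel_int)
  then show "integrable M (\<lambda>\<omega>. h (S \<omega>) (W \<omega>) (Z (S \<omega>) \<omega>))"
    by (simp add: Bochner_Integration.integrable_cong[OF refl sel_sum])
  have "(\<integral>\<omega>. h (S \<omega>) (W \<omega>) (Z (S \<omega>) \<omega>) \<partial>M) = (\<integral>\<omega>. (\<Sum>k=1..N. sel k \<omega>) \<partial>M)"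
    by (rule Bochner_Integration.integral_cong[OF refl sel_sum])
  also have "\<dots> = (\<Sum>k=1..N. integral\<^sup>L M (sel k))"
    by (intro Bochner_Integration.integral_sum sel_int)
  also have "\<dots> = (\<Sum>k=1..N. \<integral>\<omega>. h k (W \<omega>) (Z k \<omega>) \<partial>M) / N"
    by (simp add: sel_integral sum_divide_distrib)
  finally show "(\<integral>\<omega>. h (S \<omega>) (W \<omega>) (Z (S \<omega>) \<omega>) \<partial>M)
      = (\<Sum>k=1..N. \<integral>\<omega>. h k (W \<omega>) (Z k \<omega>) \<partial>M) / N" .
qed

lemma integrable_inner_stochastic_gradient:
  assumes k: "k \<in> {1..N}"
    and D_int: "integrable M (\<lambda>\<omega>. (norm (W \<omega> - c))\<^sup>2)"
    and Y_int: "integrable M (\<lambda>\<omega>. (norm (g k (W \<omega>) (Z k \<omega>)))\<^sup>2)"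
  shows "integrable M (\<lambda>\<omega>. (W \<omega> - c) \<bullet> g k (W \<omega>) (Z k \<omega>))"
proof (rule Bochner_Integration.integrable_bound[OF Bochner_Integration.integrable_add[OF D_int Y_int]])
  note [measurable] = g_measurable[OF k] W_measurable Z_measurable[OF k]
  show "(\<lambda>\<omega>. (W \<omega> - c) \<bullet> g k (W \<omega>) (Z k \<omega>)) \<in> borel_measurable M"
    by measurable
  show "AE \<omega> in M. norm ((W \<omega> - c) \<bullet> g k (W \<omega>) (Z k \<omega>))
      \<le> norm ((norm (W \<omega> - c))\<^sup>2 + (norm (g k (W \<omega>) (Z k \<omega>)))\<^sup>2)"
    using abs_inner_le_power2_norm_add by (auto intro!: AE_I2)
qed

lemma integral_inner_stochastic_gradient:
  assumes k: "k \<in> {1..N}" and int: "integrable M (\<lambda>\<omega>. (W \<omega> - c) \<bullet> g k (W \<omega>) (Z k \<omega>))"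
  shows "integrable M (\<lambda>\<omega>. (W \<omega> - c) \<bullet> gradF k (W \<omega>))"
    and "(\<integral>\<omega>. (W \<omega> - c) \<bullet> g k (W \<omega>) (Z k \<omega>) \<partial>M) = (\<integral>\<omega>. (W \<omega> - c) \<bullet> gradF k (W \<omega>) \<partial>M)"
proof -
  have ind: "indep_rv M borel W \<Xi> (Z k)"
    using indep_rv_compose[OF indep_W[OF k] measurable_id measurable_fst] by simp
  note [measurable] = g_measurable[OF k]
  have q: "(\<lambda>(x, z). (x - c) \<bullet> g k x z) \<in> borel_measurable (borel \<Otimes>\<^sub>M \<Xi>)"
    by measurable
  have frozen: "(\<integral>\<omega>. (x - c) \<bullet> g k x (Z k \<omega>) \<partial>M) = (x - c) \<bullet> gradF k x" for x
    using unbiased[OF k, of x] by simp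
  note iterated = integral_indep_rv_iterated[OF ind, where q = "\<lambda>x z. (x - c) \<bullet> g k x z", OF q int,
      unfolded frozen]
  have meas: "(\<lambda>x. (x - c) \<bullet> gradF k x) \<in> borel_measurable borel"
    using iterated(3) by auto
  show "integrable M (\<lambda>\<omega>. (W \<omega> - c) \<bullet> gradF k (W \<omega>))"
    using iterated(3) integrable_distr_eq[OF W_measurable meas] by simp
  show "(\<integral>\<omega>. (W \<omega> - c) \<bullet> g k (W \<omega>) (Z k \<omega>) \<partial>M) = (\<integral>\<omega>. (W \<omega> - c) \<bullet> gradF k (W \<omega>) \<partial>M)"
    using iterated(1) integral_distr[OF W_measurable meas] by simp
qed

lemma integral_sq_dist_step:
  fixes c :: 'a and e :: real
  assumes D_int: "integrable M (\<lambda>\<omega>. (norm (W \<omega> - c))\<^sup>2)"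
    and Y_int: "\<And>k. k \<in> {1..N} \<Longrightarrow> integrable M (\<lambda>\<omega>. (norm (g k (W \<omega>) (Z k \<omega>)))\<^sup>2)"
  shows "(\<integral>\<omega>. (norm (W \<omega> - e *\<^sub>R g (S \<omega>) (W \<omega>) (Z (S \<omega>) \<omega>) - c))\<^sup>2 \<partial>M)
      = (\<integral>\<omega>. (norm (W \<omega> - c))\<^sup>2 \<partial>M)
        - 2 * e * ((\<Sum>k=1..N. \<integral>\<omega>. (W \<omega> - c) \<bullet> gradF k (W \<omega>) \<partial>M) / N)
        + e\<^sup>2 * ((\<Sum>k=1..N. \<integral>\<omega>. (norm (g k (W \<omega>) (Z k \<omega>)))\<^sup>2 \<partial>M) / N)"
proof -
  have C_meas: "(\<lambda>(x, z). (x - c) \<bullet> g k x z) \<in> borel_measurable (borel \<Otimes>\<^sub>M \<Xi>)"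
    and Y_meas: "(\<lambda>(x, z). (norm (g k x z))\<^sup>2) \<in> borel_measurable (borel \<Otimes>\<^sub>M \<Xi>)"
    if k: "k \<in> {1..N}" for k
    using g_measurable[OF k] by measurable
  have C_int: "integrable M (\<lambda>\<omega>. (W \<omega> - c) \<bullet> g k (W \<omega>) (Z k \<omega>))" if k: "k \<in> {1..N}" for k
    using integrable_inner_stochastic_gradient[OF k D_int Y_int[OF k]] .
  note C = integral_selected_task[where h = "\<lambda>k x z. (x - c) \<bullet> g k x z", OF C_meas C_int]
  note Y = integral_selected_task[where h = "\<lambda>k x z. (norm (g k x z))\<^sup>2", OF Y_meas Y_int]
  have "(\<integral>\<omega>. (norm (W \<omega> - e *\<^sub>R g (S \<omega>) (W \<omega>) (Z (S \<omega>) \<omega>) - c))\<^sup>2 \<partial>M)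
      = (\<integral>\<omega>. (norm (W \<omega> - c))\<^sup>2 - 2 * e * ((W \<omega> - c) \<bullet> g (S \<omega>) (W \<omega>) (Z (S \<omega>) \<omega>))
              + e\<^sup>2 * (norm (g (S \<omega>) (W \<omega>) (Z (S \<omega>) \<omega>)))\<^sup>2 \<partial>M)"
  proof (rule Bochner_Integration.integral_cong[OF refl])
    fix \<omega>
    have "W \<omega> - e *\<^sub>R g (S \<omega>) (W \<omega>) (Z (S \<omega>) \<omega>) - c
        = (W \<omega> - c) - e *\<^sub>R g (S \<omega>) (W \<omega>) (Z (S \<omega>) \<omega>)"
      by (simp add: algebra_simps)
    then show "(norm (W \<omega> - e *\<^sub>R g (S \<omega>) (W \<omega>) (Z (S \<omega>) \<omega>) - c))\<^sup>2
        = (norm (W \<omega> - c))\<^sup>2 - 2 * e * ((W \<omega> - c) \<bullet> g (S \<omega>) (W \<omega>) (Z (S \<omega>) \<omega>))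
          + e\<^sup>2 * (norm (g (S \<omega>) (W \<omega>) (Z (S \<omega>) \<omega>)))\<^sup>2"
      by (simp only: norm_diff_scaleR_power2)
  qed
  also have "\<dots> = (\<integral>\<omega>. (norm (W \<omega> - c))\<^sup>2 \<partial>M)
      - 2 * e * (\<integral>\<omega>. (W \<omega> - c) \<bullet> g (S \<omega>) (W \<omega>) (Z (S \<omega>) \<omega>) \<partial>M)
      + e\<^sup>2 * (\<integral>\<omega>. (norm (g (S \<omega>) (W \<omega>) (Z (S \<omega>) \<omega>)))\<^sup>2 \<partial>M)"
    using D_int C(1) Y(1) by simp
  also have "\<dots> = (\<integral>\<omega>. (norm (W \<omega> - c))\<^sup>2 \<partial>M)
        - 2 * e * ((\<Sum>k=1..N. \<integral>\<omega>. (W \<omega> - c) \<bullet> gradF k (W \<omega>) \<partial>M) / N)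
        + e\<^sup>2 * ((\<Sum>k=1..N. \<integral>\<omega>. (norm (g k (W \<omega>) (Z k \<omega>)))\<^sup>2 \<partial>M) / N)"
    using C(2) Y(2) integral_inner_stochastic_gradient(2)[OF _ C_int] by simp
  finally show ?thesis .
qed

lemma integral_sq_dist_step_le:
  fixes F :: "nat \<Rightarrow> 'a \<Rightarrow> real" and c :: 'a and e \<mu> G :: real
  assumes sc: "\<And>k. k \<in> {1..N} \<Longrightarrow> strongly_convex \<mu> (F k) (gradF k)"
    and min: "\<And>x. (\<Sum>k=1..N. F k c) \<le> (\<Sum>k=1..N. F k x)"
    and D_int: "integrable M (\<lambda>\<omega>. (norm (W \<omega> - c))\<^sup>2)"
    and Y_int: "\<And>k. k \<in> {1..N} \<Longrightarrow> integrable M (\<lambda>\<omega>. (norm (g k (W \<omega>) (Z k \<omega>)))\<^sup>2)"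
    and Y_le: "\<And>k. k \<in> {1..N} \<Longrightarrow> (\<integral>\<omega>. (norm (g k (W \<omega>) (Z k \<omega>)))\<^sup>2 \<partial>M) \<le> G\<^sup>2"
    and e: "e \<ge> 0"
  shows "(\<integral>\<omega>. (norm (W \<omega> - e *\<^sub>R g (S \<omega>) (W \<omega>) (Z (S \<omega>) \<omega>) - c))\<^sup>2 \<partial>M)
      \<le> (1 - \<mu> * e) * (\<integral>\<omega>. (norm (W \<omega> - c))\<^sup>2 \<partial>M) + e\<^sup>2 * G\<^sup>2"
proof -
  let ?\<Delta> = "\<integral>\<omega>. (norm (W \<omega> - c))\<^sup>2 \<partial>M"
  have N: "real N > 0" using N_ge_1 by simp
  have grad_int: "integrable M (\<lambda>\<omega>. (W \<omega> - c) \<bullet> gradF k (W \<omega>))" if k: "k \<in> {1..N}" for k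
    using integral_inner_stochastic_gradient(1)[OF k integrable_inner_stochastic_gradient[OF k D_int Y_int[OF k]]] .
  have "real N * (\<mu> / 2 * ?\<Delta>) = (\<integral>\<omega>. real (card {1..N}) * (\<mu> / 2 * (norm (W \<omega> - c))\<^sup>2) \<partial>M)"
    by simp
  also have "\<dots> \<le> (\<integral>\<omega>. (\<Sum>k=1..N. (W \<omega> - c) \<bullet> gradF k (W \<omega>)) \<partial>M)"
    using D_int grad_int
    by (intro integral_mono sum_inner_gradient_ge_at_minimizer[OF sc min]) auto
  also have "\<dots> = (\<Sum>k=1..N. \<integral>\<omega>. (W \<omega> - c) \<bullet> gradF k (W \<omega>) \<partial>M)"
    using grad_int by (rule Bochner_Integration.integral_sum)
  finally have descent: "\<mu> / 2 * ?\<Delta> \<le> (\<Sum>k=1..N. \<integral>\<omega>. (W \<omega> - c) \<bullet> gradF k (W \<omega>) \<partial>M) / N"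
    using N by (simp add: field_simps)
  have "(\<Sum>k=1..N. \<integral>\<omega>. (norm (g k (W \<omega>) (Z k \<omega>)))\<^sup>2 \<partial>M) \<le> (\<Sum>k=1..N. G\<^sup>2)"
    using Y_le by (rule sum_mono)
  then have second_moment: "(\<Sum>k=1..N. \<integral>\<omega>. (norm (g k (W \<omega>) (Z k \<omega>)))\<^sup>2 \<partial>M) / N \<le> G\<^sup>2"
    using N by (simp add: field_simps)
  have "(1 - \<mu> * e) * ?\<Delta> = ?\<Delta> - 2 * e * (\<mu> / 2 * ?\<Delta>)"
    by (simp add: algebra_simps)
  then show ?thesis
    using integral_sq_dist_step[OF D_int Y_int, of e]
      mult_left_mono[OF descent, of "2 * e"] mult_left_mono[OF second_moment, of "e\<^sup>2"] e
    by simp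
qed

end

theorem mainTheorem4:
  fixes M :: "'m measure" and \<Xi> :: "'c measure"
    and N :: nat and L \<mu> G :: real and \<sigma> :: "nat \<Rightarrow> real"
    and F :: "nat \<Rightarrow> 'a::euclidean_space \<Rightarrow> real" and gradF :: "nat \<Rightarrow> 'a \<Rightarrow> 'a"
    and g :: "nat \<Rightarrow> 'a \<Rightarrow> 'c \<Rightarrow> 'a"
    and wstar :: 'a and \<eta> :: "nat \<Rightarrow> real"
    and w :: "nat \<Rightarrow> 'm \<Rightarrow> 'a" and \<xi> :: "nat \<Rightarrow> nat \<Rightarrow> 'm \<Rightarrow> 'c" and s :: "nat \<Rightarrow> 'm \<Rightarrow> nat"
    and t :: nat
  assumes P: "prob_space M"
    and N: "N \<ge> 1"
    and L: "L > 0" and mu: "\<mu> > 0"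
    and grad: "\<And>k. k \<in> {1..N} \<Longrightarrow> is_gradient (F k) (gradF k)"
    and smooth: "\<And>k. k \<in> {1..N} \<Longrightarrow> L_smooth L (F k) (gradF k)"
    and sconv: "\<And>k. k \<in> {1..N} \<Longrightarrow> strongly_convex \<mu> (F k) (gradF k)"
    and wstar: "\<And>x. (1 / real N) * (\<Sum>k=1..N. F k wstar) \<le> (1 / real N) * (\<Sum>k=1..N. F k x)"
    \<comment> \<open>stochastic gradients: measurable, unbiased, bounded variance, bounded second moment\<close>
    and g_meas: "\<And>k. k \<in> {1..N} \<Longrightarrow> (\<lambda>(x, z). g k x z) \<in> borel_measurable (borel \<Otimes>\<^sub>M \<Xi>)"
    and unbiased: "\<And>r k x. k \<in> {1..N} \<Longrightarrow>
        integrable M (\<lambda>\<omega>. g k x (\<xi> r k \<omega>)) \<and> integral\<^sup>L M (\<lambda>\<omega>. g k x (\<xi> r k \<omega>)) = gradF k x"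
    and var: "\<And>r k. k \<in> {1..N} \<Longrightarrow>
        integrable M (\<lambda>\<omega>. (norm (g k (w r \<omega>) (\<xi> r k \<omega>) - gradF k (w r \<omega>)))\<^sup>2) \<and>
        integral\<^sup>L M (\<lambda>\<omega>. (norm (g k (w r \<omega>) (\<xi> r k \<omega>) - gradF k (w r \<omega>)))\<^sup>2) \<le> (\<sigma> k)\<^sup>2"
    and second: "\<And>r k. k \<in> {1..N} \<Longrightarrow>
        integrable M (\<lambda>\<omega>. (norm (g k (w r \<omega>) (\<xi> r k \<omega>)))\<^sup>2) \<and>
        integral\<^sup>L M (\<lambda>\<omega>. (norm (g k (w r \<omega>) (\<xi> r k \<omega>)))\<^sup>2) \<le> G\<^sup>2"
    \<comment> \<open>random variables and their independence\<close>
    and w_meas: "\<And>r. w r \<in> borel_measurable M"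
    and w_sq: "\<And>r. integrable M (\<lambda>\<omega>. (norm (w r \<omega> - wstar))\<^sup>2)"
    and xi_meas: "\<And>r k. k \<in> {1..N} \<Longrightarrow> \<xi> r k \<in> measurable M \<Xi>"
    and s_meas: "\<And>r. s r \<in> measurable M (count_space UNIV)"
    and s_range: "\<And>r \<omega>. \<omega> \<in> space M \<Longrightarrow> s r \<omega> \<in> {1..N}"
    and s_unif: "\<And>r k. k \<in> {1..N} \<Longrightarrow> prob_space.prob M {\<omega> \<in> space M. s r \<omega> = k} = 1 / real N"
    and indep_xi: "\<And>r. prob_space.indep_vars M (\<lambda>_. \<Xi>) (\<xi> r) {1..N}"
    and indep_xi_s: "\<And>r. indep_rv M (PiM {1..N} (\<lambda>_. \<Xi>)) (\<lambda>\<omega>. (\<lambda>k\<in>{1..N}. \<xi> r k \<omega>))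
                                         (count_space UNIV) (s r)"
    and indep_w: "\<And>r. indep_rv M borel (w r)
                        (PiM {1..N} (\<lambda>_. \<Xi>) \<Otimes>\<^sub>M count_space UNIV) (\<lambda>\<omega>. (\<lambda>k\<in>{1..N}. \<xi> r k \<omega>, s r \<omega>))"
    \<comment> \<open>the iteration\<close>
    and iter: "\<And>r \<omega>. \<omega> \<in> space M \<Longrightarrow>
        w (Suc r) \<omega> = w r \<omega> - \<eta> r *\<^sub>R g (s r \<omega>) (w r \<omega>) (\<xi> r (s r \<omega>) \<omega>)"
    \<comment> \<open>step sizes\<close>
    and eta_pos: "\<And>r. \<eta> r > 0"
    and eta_L: "\<And>r. \<eta> r \<le> 1 / L"
    and eta_mono: "\<And>r. \<eta> (Suc r) \<le> \<eta> r"
    and eta_2: "\<And>r. \<eta> r \<le> 2 * \<eta> (Suc r)"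
  shows "(let \<Delta> = (\<lambda>r. integral\<^sup>L M (\<lambda>\<omega>. (norm (w r \<omega> - wstar))\<^sup>2));
              \<Gamma> = (1 / real N) * (\<Sum>k=1..N. F k wstar) - (1 / real N) * (\<Sum>k=1..N. (INF x. F k x));
              B = (1 / (real N)\<^sup>2) * (\<Sum>k=1..N. (\<sigma> k)\<^sup>2) + 2 * L * \<Gamma> + G\<^sup>2
          in \<Delta> (Suc t) \<le> (1 - \<mu> * \<eta> t) * \<Delta> t + (\<eta> t)\<^sup>2 * B)"
proof -
  interpret prob_space M by (rule P)
  interpret step: random_task_step M \<Xi> N g gradF "w t" "\<xi> t" "s t"
  proof unfold_locales
    show "indep_rv M borel (w t) (\<Xi> \<Otimes>\<^sub>M count_space UNIV) (\<lambda>\<omega>. (\<xi> t k \<omega>, s t \<omega>))"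
      if "k \<in> {1..N}" for k
      using indep_rv_component_pair[OF indep_w that] .
    show "indep_rv M \<Xi> (\<xi> t k) (count_space UNIV) (s t)" if "k \<in> {1..N}" for k
      using indep_rv_component[OF indep_xi_s that] .
  qed (use N g_meas unbiased s_range s_unif in auto)
  have minimal: "(\<Sum>k=1..N. F k wstar) \<le> (\<Sum>k=1..N. F k x)" for x
    using wstar[of x] N by (simp add: divide_le_cancel)
  define \<Gamma> where "\<Gamma> = (1 / real N) * (\<Sum>k=1..N. F k wstar) - (1 / real N) * (\<Sum>k=1..N. (INF x. F k x))"
  define B where "B = (1 / (real N)\<^sup>2) * (\<Sum>k=1..N. (\<sigma> k)\<^sup>2) + 2 * L * \<Gamma> + G\<^sup>2"
  have "0 \<le> \<Gamma>"
    unfolding \<Gamma>_def using sum_INF_le_if_strongly_convex[where I = "{1..N}" and f = F and y = wstar, OF sconv mu] N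
    by (simp add: divide_le_cancel)
  then have "G\<^sup>2 \<le> B"
    unfolding B_def using L by (simp add: sum_nonneg)
  have "(\<integral>\<omega>. (norm (w (Suc t) \<omega> - wstar))\<^sup>2 \<partial>M)
      = (\<integral>\<omega>. (norm (w t \<omega> - \<eta> t *\<^sub>R g (s t \<omega>) (w t \<omega>) (\<xi> t (s t \<omega>) \<omega>) - wstar))\<^sup>2 \<partial>M)"
    by (rule Bochner_Integration.integral_cong) (simp_all add: iter)
  also have "\<dots> \<le> (1 - \<mu> * \<eta> t) * (\<integral>\<omega>. (norm (w t \<omega> - wstar))\<^sup>2 \<partial>M) + (\<eta> t)\<^sup>2 * G\<^sup>2"
    using second eta_pos[of t]
    by (intro step.integral_sq_dist_step_le[OF sconv minimal w_sq]) (auto simp: less_imp_le)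
  also have "\<dots> \<le> (1 - \<mu> * \<eta> t) * (\<integral>\<omega>. (norm (w t \<omega> - wstar))\<^sup>2 \<partial>M) + (\<eta> t)\<^sup>2 * B"
    using \<open>G\<^sup>2 \<le> B\<close> by (simp add: mult_left_mono)
  finally show ?thesis
    unfolding Let_def B_def \<Gamma>_def .
qed

end
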